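(* Let $X=(X_1,\dots,X_p)$ and $Y$ be Euclidean-valued random variables and $\mathcal{E}$ an environmental random variable. Let $S\subseteq\{1,\dots,p\}$ with complement $N$, write $X_A=\{X_i:i\in A\}$, and suppose $p(y\mid x_S,\epsilon)=p(y\mid x_S)$ for all $\epsilon\in\mathrm{supp}(\mathcal{E})$. Consider the assumption: for every environment $\epsilon$ there exists an environment $\epsilon'$ with $p(x,y\mid\epsilon')=p(y,x_S\mid\epsilon)\,p(x_N\mid\epsilon)$. This assumption is strictly stronger than the controllability condition for the feature $\Phi=X_S$: it implies that $X_S$ satisfies the controllability condition, while the controllability condition does not imply it.
   Context: For $\Phi=X_S$, $\mathcal{E}_\phi$ is a minimal (w.r.t. generated $\sigma$-algebras) random variable in $\sigma(\mathcal{E})$ with $\Phi$ conditionally independent of $\mathcal{E}$ given $\mathcal{E}_\phi$; it is assumed there is $\mathcal{E}_\psi$ independent of $\mathcal{E}_\phi$ with $\sigma(\mathcal{E})=\sigma(\mathcal{E}_\phi,\mathcal{E}_\psi)$, and environments are written $\epsilon=(\epsilon_\phi,\epsilon_\psi)$. Controllability condition: $\Phi$ satisfies it if for every $\epsilon=(\epsilon_\phi,\epsilon_\psi)\in\mathrm{supp}(\mathcal{E})$ there exists $\tilde\epsilon_\psi\in\mathrm{supp}(\mathcal{E}_\psi)$ such that $Y$ and $X$ are conditionally independent given $(\Phi,\epsilon_\phi,\tilde\epsilon_\psi)$. *)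

theory Defs
  imports "HOL-Probability.Probability"
begin

text \<open>
  X = (X_i)_{i in I} takes values in real^'n (index type 'n finite, standing for {1..p}),
  Y takes values in a Euclidean space 'y.
  An environment is a pair e = (e_phi, e_psi) in 'a * 'b.  Since E_phi and E_psi are
  independent and generate sigma(E), supp(E) = supp(E_phi) x supp(E_psi) =: Sphi x Spsi.
  P e is the joint law of (X, Y) given E = e, a probability measure on real^'n * 'y.
\<close>

text \<open>The sub-vector X_A, represented in real^'n with the coordinates outside A set to 0.\<close>
definition restr :: "'n set \<Rightarrow> real^'n \<Rightarrow> real^'n" where
  "restr A x = (\<chi> i. if i \<in> A then x $ i else 0)"

definition gen_alg :: "('w) measure \<Rightarrow> ('w \<Rightarrow> 'v::topological_space) \<Rightarrow> 'w measure" where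
  "gen_alg Q f = vimage_algebra (space Q) f borel"

definition cond_indep_Y_X_given_XS ::
  "'n::finite set \<Rightarrow> ((real^'n) \<times> 'y::euclidean_space) measure \<Rightarrow> bool" where
  "cond_indep_Y_X_given_XS S Q \<longleftrightarrow>
     (\<forall>B \<in> sets (borel :: 'y measure).
        AE z in Q. real_cond_exp Q (gen_alg Q fst) (\<lambda>z. indicator B (snd z)) z
                 = real_cond_exp Q (gen_alg Q (\<lambda>z. restr S (fst z))) (\<lambda>z. indicator B (snd z)) z)"

definition phi_law ::
  "'n::finite set \<Rightarrow> ('e \<Rightarrow> ((real^'n) \<times> 'y::euclidean_space) measure) \<Rightarrow> 'e \<Rightarrow> (real^'n) measure" where
  "phi_law S P e = distr (P e) borel (\<lambda>z. restr S (fst z))"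

text \<open>Standing setting:
  (i) each P e is a probability law on the Borel sets;
  (ii) invariance p(y | x_S, e) = p(y | x_S): there is a common version g_B(X_S) of
       P(Y in B | X_S, E = e) for all environments e;
  (iii) E_phi (first component) renders Phi independent of E: the law of Phi depends on e
       only through e_phi;
  (iv) minimality of E_phi: for every function h of the environment such that the law of
       Phi depends on e only through h(e), e_phi is a function of h(e)
       (i.e. sigma(E_phi) is contained in sigma(h(E)));
  (v) supports nonempty.\<close>
definition setting ::
  "'a set \<Rightarrow> 'b set \<Rightarrow> ('a \<times> 'b \<Rightarrow> ((real^'n::finite) \<times> 'y::euclidean_space) measure) \<Rightarrow> 'n set \<Rightarrow> bool" where
  "setting Sphi Spsi P S \<longleftrightarrow>
     Sphi \<noteq> {} \<and> Spsi \<noteq> {} \<and>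
     (\<forall>e \<in> Sphi \<times> Spsi. prob_space (P e) \<and> sets (P e) = sets borel) \<and>
     (\<exists>g :: 'y set \<Rightarrow> real^'n \<Rightarrow> real.
        \<forall>B \<in> sets (borel :: 'y measure). g B \<in> borel_measurable borel \<and>
          (\<forall>e \<in> Sphi \<times> Spsi.
             AE z in P e. real_cond_exp (P e) (gen_alg (P e) (\<lambda>z. restr S (fst z)))
                              (\<lambda>z. indicator B (snd z)) z = g B (restr S (fst z)))) \<and>
     (\<forall>e \<in> Sphi \<times> Spsi. \<forall>e' \<in> Sphi \<times> Spsi. fst e = fst e' \<longrightarrow> phi_law S P e = phi_law S P e') \<and>
     (\<forall>h :: 'a \<times> 'b \<Rightarrow> 'a \<times> 'b.
        (\<forall>e \<in> Sphi \<times> Spsi. \<forall>e' \<in> Sphi \<times> Spsi. h e = h e' \<longrightarrow> phi_law S P e = phi_law S P e') \<longrightarrow>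
        (\<forall>e \<in> Sphi \<times> Spsi. \<forall>e' \<in> Sphi \<times> Spsi. h e = h e' \<longrightarrow> fst e = fst e'))"

definition controllable ::
  "'a set \<Rightarrow> 'b set \<Rightarrow> ('a \<times> 'b \<Rightarrow> ((real^'n::finite) \<times> 'y::euclidean_space) measure) \<Rightarrow> 'n set \<Rightarrow> bool" where
  "controllable Sphi Spsi P S \<longleftrightarrow>
     (\<forall>e \<in> Sphi \<times> Spsi. \<exists>b \<in> Spsi. cond_indep_Y_X_given_XS S (P (fst e, b)))"

definition product_assumption ::
  "'a set \<Rightarrow> 'b set \<Rightarrow> ('a \<times> 'b \<Rightarrow> ((real^'n::finite) \<times> 'y::euclidean_space) measure) \<Rightarrow> 'n set \<Rightarrow> bool" where
  "product_assumption Sphi Spsi P S \<longleftrightarrow>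
     (\<forall>e \<in> Sphi \<times> Spsi. \<exists>e' \<in> Sphi \<times> Spsi.
        P e' = distr
                 (distr (P e) (borel :: ('y \<times> (real^'n)) measure) (\<lambda>z. (snd z, restr S (fst z)))
                  \<Otimes>\<^sub>M distr (P e) (borel :: (real^'n) measure) (\<lambda>z. restr (- S) (fst z)))
                 borel (\<lambda>((y, xs), xn). (xs + xn, y)))"

end

theory Submission
  imports Defs
begin

text \<open>
  Under the product assumption the environment \<open>e'\<close> attached to \<open>e\<close> draws \<open>(X\<^sub>S, Y)\<close> as under
  \<open>e\<close> and \<open>X\<^sub>N\<close> as an independent copy of \<open>X\<^sub>N\<close> under \<open>e\<close>.  Hence \<open>X\<^sub>S\<close> has the same law
  under \<open>e\<close> and \<open>e'\<close>, so by minimality of \<open>E\<^sub>\<phi>\<close> the two environments share their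
  \<open>\<phi>\<close>-component; and under \<open>e'\<close> the coordinates \<open>X\<^sub>N\<close> are pure noise, so
  \<open>P(Y \<in> B | X) = g\<^sub>B(X\<^sub>S) = P(Y \<in> B | X\<^sub>S)\<close> with the invariant version \<open>g\<^sub>B\<close>.  Thus the
  \<open>\<psi>\<close>-component of \<open>e'\<close> witnesses controllability.

  For the converse take \<open>S = {}\<close>, \<open>Y\<close> a fair coin, and two environments differing only in
  \<open>\<psi>\<close>: \<open>X = 0\<close> in one and \<open>X = (Y, Y)\<close> in the other.  The first makes \<open>X\<close> constant, which
  gives controllability, but decoupling \<open>X\<close> from \<open>Y\<close> in the second gives the event
  \<open>X\<^sub>1 = 1, Y = 0\<close> probability \<open>1/4\<close>, while it is impossible in both environments.
\<close>

lemma continuous_on_restr: "continuous_on UNIV (restr A)"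
  unfolding restr_def
proof (intro continuous_intros)
  fix i show "continuous_on UNIV (\<lambda>x::real^'a. if i \<in> A then x $ i else 0)"
    by (cases "i \<in> A") (auto intro!: continuous_intros)
qed

lemma borel_measurable_restr[measurable]: "restr A \<in> borel_measurable borel"
  by (rule borel_measurable_continuous_onI[OF continuous_on_restr])

lemma restr_restr_add_compl[simp]: "restr S (restr S a + restr (- S) b) = restr S a"
  unfolding restr_def by (simp add: vec_eq_iff)

lemma restr_empty[simp]: "restr {} a = 0"
  unfolding restr_def by (simp add: vec_eq_iff)

lemma restr_UNIV[simp]: "restr UNIV a = a"
  unfolding restr_def by (simp add: vec_eq_iff)

lemma sets_borel_prod[measurable_cong]:
  "sets (borel :: ('a::second_countable_topology \<times> 'b::second_countable_topology) measure) =
   sets (borel \<Otimes>\<^sub>M borel)"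
  by (metis borel_prod)

lemma integrable_indicator_snd:
  fixes N :: "('a::second_countable_topology \<times> 'b::second_countable_topology) measure"
  assumes "prob_space N" and [measurable_cong]: "sets N = sets borel"
    and [measurable]: "B \<in> sets borel"
  shows "integrable N (\<lambda>z. indicator B (snd z) :: real)"
proof -
  interpret prob_space N by fact
  show ?thesis by (rule integrable_const_bound[where B=1]) (auto split: split_indicator)
qed

lemma sets_gen_alg: "sets (gen_alg Q f) = {f -` C \<inter> space Q | C. C \<in> sets borel}"
  unfolding gen_alg_def by (simp add: sets_vimage_algebra2)

lemma measurable_gen_alg_comp:
  assumes "k \<in> borel_measurable borel"
  shows "(\<lambda>z. k (f z)) \<in> borel_measurable (gen_alg Q f)"
  unfolding gen_alg_def using assms
  by (intro measurable_compose[OF measurable_vimage_algebra1]) auto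

lemma sigma_finite_subalgebra_gen_alg:
  assumes "prob_space Q" "f \<in> borel_measurable Q"
  shows "sigma_finite_subalgebra Q (gen_alg Q f)"
proof (rule finite_measure_subalgebra_is_sigma_finite)
  have "sets (gen_alg Q f) \<subseteq> sets Q"
    using assms(2) by (auto simp: sets_gen_alg)
  then show "finite_measure_subalgebra Q (gen_alg Q f)"
    using assms(1)
    unfolding finite_measure_subalgebra_def finite_measure_subalgebra_axioms_def subalgebra_def
    by (auto simp: prob_space_def gen_alg_def)
qed

lemma real_cond_exp_gen_alg_AE_const:
  fixes f :: "'w \<Rightarrow> real" and X :: "'w \<Rightarrow> 'v::topological_space"
  assumes Q: "prob_space Q" and f[measurable]: "integrable Q f"
    and X[measurable]: "X \<in> borel_measurable Q" and const: "AE z in Q. X z = c"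
  shows "AE z in Q. real_cond_exp Q (gen_alg Q X) f z = (\<integral>x. f x \<partial>Q)"
proof -
  interpret prob_space Q by (rule Q)
  interpret sigma_finite_subalgebra Q "gen_alg Q X"
    by (rule sigma_finite_subalgebra_gen_alg[OF Q X])
  show ?thesis
  proof (rule real_cond_exp_charact)
    fix A assume "A \<in> sets (gen_alg Q X)"
    then obtain C where [measurable]: "C \<in> sets borel" and A: "A = X -` C \<inter> space Q"
      by (auto simp: sets_gen_alg)
    have [measurable]: "A \<in> sets Q" unfolding A by measurable
    have ind: "AE x in Q. indicator A x = (indicator C c :: real)"
      using const AE_space by eventually_elim (auto simp: A indicator_def)
    have set_integral: "(\<integral>x\<in>A. h x \<partial>Q) = indicator C c * (\<integral>x. h x \<partial>Q)"
      if [measurable]: "h \<in> borel_measurable Q" for h :: "'w \<Rightarrow> real"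
    proof -
      have "AE x in Q. indicator A x * h x = indicator C c * h x"
        using ind by eventually_elim simp
      then have "(\<integral>x. indicator A x * h x \<partial>Q) = (\<integral>x. indicator C c * h x \<partial>Q)"
        by (rule integral_cong_AE[rotated 2]) measurable
      then show ?thesis by (simp add: set_lebesgue_integral_def)
    qed
    show "(\<integral>x\<in>A. f x \<partial>Q) = (\<integral>x\<in>A. (\<integral>x. f x \<partial>Q) \<partial>Q)"
      by (simp add: set_integral prob_space)
  qed (auto intro: f)
qed

section \<open>Decoupling \<open>X\<^sub>N\<close> from \<open>(X\<^sub>S, Y)\<close>\<close>

definition splice ::
  "'n::finite set \<Rightarrow> ((real^'n) \<times> 'y) \<times> ((real^'n) \<times> 'y) \<Rightarrow> (real^'n) \<times> 'y" where
  "splice S = (\<lambda>(z, z'). (restr S (fst z) + restr (- S) (fst z'), snd z))"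

text \<open>The law \<open>p(y, x\<^sub>S) p(x\<^sub>N)\<close> of the product assumption: \<open>(X\<^sub>S, Y)\<close> is taken from one draw of
  \<open>M\<close> and \<open>X\<^sub>N\<close> from an independent second draw.\<close>
definition decoupled ::
  "'n::finite set \<Rightarrow> ((real^'n) \<times> 'y::euclidean_space) measure \<Rightarrow> ((real^'n) \<times> 'y) measure" where
  "decoupled S M = distr (M \<Otimes>\<^sub>M M) borel (splice S)"

lemma restr_fst_splice[simp]: "restr S (fst (splice S p)) = restr S (fst (fst p))"
  by (simp add: splice_def split: prod.split)

lemma snd_splice[simp]: "snd (splice S p) = snd (fst p)"
  by (simp add: splice_def split: prod.split)

lemma measurable_splice[measurable]:
  fixes M :: "((real^'n::finite) \<times> 'y::euclidean_space) measure"
  assumes [measurable_cong]: "sets M = sets borel"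
  shows "splice S \<in> M \<Otimes>\<^sub>M M \<rightarrow>\<^sub>M borel"
  unfolding splice_def by measurable

lemma sets_decoupled[simp, measurable_cong]: "sets (decoupled S M) = sets borel"
  by (simp add: decoupled_def)

lemma prob_space_decoupled:
  assumes "prob_space M" "sets M = sets borel"
  shows "prob_space (decoupled S M)"
  unfolding decoupled_def
  by (intro prob_space.prob_space_distr prob_space_pair assms measurable_splice)

lemma product_law_eq_decoupled:
  fixes M :: "((real^'n::finite) \<times> 'y::euclidean_space) measure"
  assumes M: "prob_space M" and [measurable_cong]: "sets M = sets borel"
  shows "distr
           (distr M (borel :: ('y \<times> (real^'n)) measure) (\<lambda>z. (snd z, restr S (fst z)))
            \<Otimes>\<^sub>M distr M (borel :: (real^'n) measure) (\<lambda>z. restr (- S) (fst z)))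
           borel (\<lambda>((y, xs), xn). (xs + xn, y))
       = decoupled S M"
proof -
  have "sigma_finite_measure (distr M (borel :: (real^'n) measure) (\<lambda>z. restr (- S) (fst z)))"
    by (intro prob_space_imp_sigma_finite prob_space.prob_space_distr[OF M]) measurable
  then have pair: "distr M (borel :: ('y \<times> (real^'n)) measure) (\<lambda>z. (snd z, restr S (fst z)))
                     \<Otimes>\<^sub>M distr M (borel :: (real^'n) measure) (\<lambda>z. restr (- S) (fst z))
                   = distr (M \<Otimes>\<^sub>M M) (borel \<Otimes>\<^sub>M borel)
                       (\<lambda>(z, z'). ((snd z, restr S (fst z)), restr (- S) (fst z')))"
    by (rule pair_measure_distr[rotated 2]) measurable
  have [measurable]: "(\<lambda>((y, xs), xn). (xs + xn, y))
      \<in> (borel \<Otimes>\<^sub>M borel :: (('y \<times> (real^'n)) \<times> (real^'n)) measure) \<rightarrow>\<^sub>M borel"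
    unfolding case_prod_beta' by measurable
  show ?thesis
    unfolding decoupled_def pair
    by (subst distr_distr) (auto intro!: distr_cong simp: splice_def)
qed

lemma distr_decoupled_restr:
  fixes M :: "((real^'n::finite) \<times> 'y::euclidean_space) measure"
  assumes M: "prob_space M" and [measurable_cong]: "sets M = sets borel"
  shows "distr (decoupled S M) borel (\<lambda>z. restr S (fst z)) = distr M borel (\<lambda>z. restr S (fst z))"
proof -
  have "distr (decoupled S M) borel (\<lambda>z. restr S (fst z))
      = distr (M \<Otimes>\<^sub>M M) borel (\<lambda>p. restr S (fst (fst p)))"
    unfolding decoupled_def by (subst distr_distr) (auto simp: comp_def)
  also have "\<dots> = distr (distr (M \<Otimes>\<^sub>M M) M fst) borel (\<lambda>z. restr S (fst z))"
    by (subst distr_distr) (auto simp: comp_def)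
  also have "\<dots> = distr M borel (\<lambda>z. restr S (fst z))"
    by (simp add: prob_space.distr_pair_fst[OF M])
  finally show ?thesis .
qed

lemma space_decoupled[simp]: "space (decoupled S M) = UNIV"
  by (simp add: decoupled_def)

lemma emeasure_decoupled_empty_Times:
  fixes M :: "((real^'n::finite) \<times> 'y::euclidean_space) measure"
  assumes M: "prob_space M" and sets_M: "sets M = sets borel"
    and A: "A \<in> sets borel" and B: "B \<in> sets borel"
  shows "emeasure (decoupled {} M) (A \<times> B) = emeasure M (UNIV \<times> B) * emeasure M (A \<times> UNIV)"
proof -
  interpret prob_space M by (rule M)
  have space_M: "space M = UNIV"
    using sets_eq_imp_space_eq[OF sets_M] by simp
  have sets_Times: "A \<times> B \<in> sets borel" "UNIV \<times> B \<in> sets M" "A \<times> UNIV \<in> sets M"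
    unfolding sets_M sets_borel_prod using A B by (auto intro: pair_measureI)
  have "splice {} -` (A \<times> B) \<inter> space (M \<Otimes>\<^sub>M M) = (UNIV \<times> B) \<times> (A \<times> UNIV)"
    by (auto simp: splice_def space_pair_measure space_M)
  then have "emeasure (decoupled {} M) (A \<times> B) = emeasure (M \<Otimes>\<^sub>M M) ((UNIV \<times> B) \<times> (A \<times> UNIV))"
    unfolding decoupled_def
    by (simp only: emeasure_distr[OF measurable_splice[OF sets_M] sets_Times(1)])
  also have "\<dots> = emeasure M (UNIV \<times> B) * emeasure M (A \<times> UNIV)"
    using sets_Times(2,3) by (rule emeasure_pair_measure_Times)
  finally show ?thesis .
qed

lemma set_integral_decoupled_fst_vimage:
  fixes M :: "((real^'n::finite) \<times> 'y::euclidean_space) measure" and k :: "(real^'n) \<times> 'y \<Rightarrow> real"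
  assumes M: "prob_space M" and [measurable_cong]: "sets M = sets borel"
    and [measurable]: "C \<in> sets borel" and k: "integrable M k"
    and k_splice: "\<And>p. k (splice S p) = k (fst p)"
  shows "(\<integral>z\<in>fst -` C. k z \<partial>decoupled S M)
       = (\<integral>z'. (\<integral>z. indicator C (restr S (fst z) + restr (- S) (fst z')) * k z \<partial>M) \<partial>M)"
proof -
  interpret M: prob_space M by (rule M)
  interpret pair_sigma_finite M M ..
  have [measurable]: "k \<in> borel_measurable M" using k by simp
  have "integrable (M \<Otimes>\<^sub>M M) (\<lambda>p. k (fst p))"
    using integrable_distr_eq[of fst "M \<Otimes>\<^sub>M M" M k] k by (simp add: M.distr_pair_fst)
  then have "integrable (M \<Otimes>\<^sub>M M)
      (\<lambda>(z, z'). indicator C (restr S (fst z) + restr (- S) (fst z')) * k z)"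
    by (rule Bochner_Integration.integrable_bound) (auto simp: indicator_def split: prod.split)
  moreover have "indicator (fst -` C) (splice S p) * k (splice S p)
      = (case p of (z, z') \<Rightarrow> indicator C (restr S (fst z) + restr (- S) (fst z')) * k z)" for p
    by (simp add: k_splice) (simp add: splice_def indicator_vimage split: prod.split)
  ultimately have "(\<integral>z'. (\<integral>z. indicator C (restr S (fst z) + restr (- S) (fst z')) * k z \<partial>M) \<partial>M)
           = (\<integral>p. indicator (fst -` C) (splice S p) * k (splice S p) \<partial>(M \<Otimes>\<^sub>M M))"
    by (simp add: integral_snd)
  also have "\<dots> = (\<integral>z\<in>fst -` C. k z \<partial>decoupled S M)"
    unfolding decoupled_def set_lebesgue_integral_def by (subst integral_distr) auto
  finally show ?thesis ..
qed

lemma integral_indicator_restr_mult_eq_version: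
  fixes M :: "((real^'n::finite) \<times> 'y::euclidean_space) measure" and g :: "real^'n \<Rightarrow> real"
  assumes M: "prob_space M" and [measurable_cong]: "sets M = sets borel"
    and [measurable]: "B \<in> sets borel" "C \<in> sets borel" "g \<in> borel_measurable borel"
    and g: "AE z in M. real_cond_exp M (gen_alg M (\<lambda>z. restr S (fst z))) (\<lambda>z. indicator B (snd z)) z
              = g (restr S (fst z))"
  shows "(\<integral>z. indicator C (restr S (fst z) + v) * indicator B (snd z) \<partial>M)
       = (\<integral>z. indicator C (restr S (fst z) + v) * g (restr S (fst z)) \<partial>M)"
proof -
  let ?F = "gen_alg M (\<lambda>z. restr S (fst z))"
  interpret prob_space M by (rule M)
  interpret sigma_finite_subalgebra M ?F
    by (rule sigma_finite_subalgebra_gen_alg[OF M]) measurable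
  have [measurable]: "(\<lambda>z. indicator C (restr S (fst z) + v) :: real) \<in> borel_measurable ?F"
    by (rule measurable_gen_alg_comp[where k = "\<lambda>u. indicator C (u + v)"]) measurable
  have "(\<integral>z. indicator C (restr S (fst z) + v) * indicator B (snd z) \<partial>M)
      = (\<integral>z. indicator C (restr S (fst z) + v) * real_cond_exp M ?F (\<lambda>z. indicator B (snd z)) z \<partial>M)"
    by (rule real_cond_exp_intg(2)[symmetric])
       (auto intro!: integrable_const_bound[where B=1] split: split_indicator)
  also have "\<dots> = (\<integral>z. indicator C (restr S (fst z) + v) * g (restr S (fst z)) \<partial>M)"
    using g by (intro integral_cong_AE) auto
  finally show ?thesis .
qed

text \<open>\<open>X\<^sub>N\<close> is independent of \<open>(X\<^sub>S, Y)\<close> under the decoupled law, so it carries no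
  information on \<open>Y\<close> beyond \<open>X\<^sub>S\<close>.\<close>
lemma real_cond_exp_decoupled:
  fixes M :: "((real^'n::finite) \<times> 'y::euclidean_space) measure" and g :: "real^'n \<Rightarrow> real"
  assumes M: "prob_space M" and sets_M[measurable_cong]: "sets M = sets borel"
    and [measurable]: "B \<in> sets borel" "g \<in> borel_measurable borel"
    and g: "AE z in M. real_cond_exp M (gen_alg M (\<lambda>z. restr S (fst z))) (\<lambda>z. indicator B (snd z)) z
              = g (restr S (fst z))"
  shows "AE z in decoupled S M.
           real_cond_exp (decoupled S M) (gen_alg (decoupled S M) fst) (\<lambda>z. indicator B (snd z)) z
         = g (restr S (fst z))"
proof -
  let ?Q = "decoupled S M"
  interpret M: prob_space M by (rule M)
  interpret G: sigma_finite_subalgebra M "gen_alg M (\<lambda>z. restr S (fst z))"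
    by (rule sigma_finite_subalgebra_gen_alg[OF M]) measurable
  interpret Q: prob_space ?Q by (rule prob_space_decoupled[OF M sets_M])
  interpret sigma_finite_subalgebra ?Q "gen_alg ?Q fst"
    by (rule sigma_finite_subalgebra_gen_alg[OF Q.prob_space_axioms]) measurable
  note int_indicator = integrable_indicator_snd[OF _ _ \<open>B \<in> sets borel\<close>]
  have int_g: "integrable M (\<lambda>z. g (restr S (fst z)))"
    using G.real_cond_exp_int(1)[OF int_indicator[OF M sets_M]]
    by (rule integrable_cong_AE_imp[OF _ _ g]) measurable
  then have "integrable ?Q (\<lambda>z. g (restr S (fst z)))"
    using integrable_distr_eq[of "\<lambda>z. restr S (fst z)" M borel g]
      integrable_distr_eq[of "\<lambda>z. restr S (fst z)" ?Q borel g]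
    by (simp add: distr_decoupled_restr[OF M sets_M])
  moreover have "(\<integral>z\<in>A. indicator B (snd z) \<partial>?Q) = (\<integral>z\<in>A. g (restr S (fst z)) \<partial>?Q)"
    if "A \<in> sets (gen_alg ?Q fst)" for A
  proof -
    from that obtain C where [measurable]: "C \<in> sets borel" and A: "A = fst -` C"
      by (auto simp: sets_gen_alg)
    show ?thesis
      unfolding A using int_indicator[OF M sets_M] int_g
      by (simp add: set_integral_decoupled_fst_vimage[OF M sets_M]
          integral_indicator_restr_mult_eq_version[OF M sets_M _ _ _ g])
  qed
  ultimately show ?thesis
    by (intro real_cond_exp_charact int_indicator Q.prob_space_axioms sets_decoupled)
       (auto intro: measurable_gen_alg_comp[where k = "\<lambda>x. g (restr S x)"])
qed

section \<open>The product assumption implies controllability\<close>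

lemma setting_prob_space:
  assumes "setting Sphi Spsi P S" "e \<in> Sphi \<times> Spsi"
  shows "prob_space (P e)" and "sets (P e) = sets borel"
proof -
  from assms(1) have "\<forall>e \<in> Sphi \<times> Spsi. prob_space (P e) \<and> sets (P e) = sets borel"
    unfolding setting_def by (elim conjE)
  with assms(2) show "prob_space (P e)" and "sets (P e) = sets borel"
    by auto
qed

lemma setting_common_version:
  fixes P :: "'a \<times> 'b \<Rightarrow> ((real^'n::finite) \<times> 'y::euclidean_space) measure"
  assumes "setting Sphi Spsi P S"
  obtains g :: "'y set \<Rightarrow> real^'n \<Rightarrow> real"
  where "\<And>B. B \<in> sets borel \<Longrightarrow> g B \<in> borel_measurable borel"
    and "\<And>B e. B \<in> sets borel \<Longrightarrow> e \<in> Sphi \<times> Spsi \<Longrightarrow>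
           AE z in P e. real_cond_exp (P e) (gen_alg (P e) (\<lambda>z. restr S (fst z)))
                          (\<lambda>z. indicator B (snd z)) z
                        = g B (restr S (fst z))"
  using assms[unfolded setting_def, THEN conjunct2, THEN conjunct2, THEN conjunct2, THEN conjunct1]
  apply (elim exE)
  subgoal for g by (rule that[of g]) auto
  done

lemma setting_fst_eq_if_phi_law_eq:
  assumes "setting Sphi Spsi P S" "e \<in> Sphi \<times> Spsi" "e' \<in> Sphi \<times> Spsi"
    and "phi_law S P e' = phi_law S P e"
  shows "fst e' = fst e"
proof -
  note minimality = assms(1)[unfolded setting_def,
      THEN conjunct2, THEN conjunct2, THEN conjunct2, THEN conjunct2, THEN conjunct2, rule_format]
  \<comment> \<open>apply minimality to the map that merges \<open>e'\<close> into \<open>e\<close>\<close>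
  define h where "h x = (if x = e' then e else x)" for x
  have "phi_law S P e1 = phi_law S P e2" if "h e1 = h e2" for e1 e2
    using that assms(4) by (auto simp: h_def split: if_splits)
  from minimality[of h, OF this assms(3,2)] show ?thesis
    by (simp add: h_def)
qed

lemma controllable_if_product_assumption:
  fixes P :: "'a \<times> 'b \<Rightarrow> ((real^'n::finite) \<times> 'y::euclidean_space) measure"
  assumes setting: "setting Sphi Spsi P S" and product: "product_assumption Sphi Spsi P S"
  shows "controllable Sphi Spsi P S"
  unfolding controllable_def
proof
  fix e assume e: "e \<in> Sphi \<times> Spsi"
  note Pe = setting_prob_space[OF setting e]
  obtain g where g_meas: "\<And>B. B \<in> sets borel \<Longrightarrow> g B \<in> borel_measurable borel"
    and g: "\<And>B e. B \<in> sets borel \<Longrightarrow> e \<in> Sphi \<times> Spsi \<Longrightarrow>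
              AE z in P e. real_cond_exp (P e) (gen_alg (P e) (\<lambda>z. restr S (fst z)))
                             (\<lambda>z. indicator B (snd z)) z
                           = g B (restr S (fst z))"
    using setting_common_version[OF setting] by blast
  have "\<exists>e' \<in> Sphi \<times> Spsi. P e' = decoupled S (P e)"
    using bspec[OF product[unfolded product_assumption_def] e]
    by (simp only: product_law_eq_decoupled[OF Pe])
  then obtain e' where e': "e' \<in> Sphi \<times> Spsi" and Pe': "P e' = decoupled S (P e)" ..
  have "phi_law S P e' = phi_law S P e"
    by (simp add: phi_law_def Pe' distr_decoupled_restr[OF Pe])
  then have "fst e' = fst e"
    by (rule setting_fst_eq_if_phi_law_eq[OF setting e e'])
  then have e'_eq: "(fst e, snd e') = e'"
    by (metis prod.collapse)
  have "cond_indep_Y_X_given_XS S (P e')"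
    unfolding cond_indep_Y_X_given_XS_def
  proof
    fix B :: "'y set" assume B: "B \<in> sets borel"
    have "AE z in P e'. real_cond_exp (P e') (gen_alg (P e') fst) (\<lambda>z. indicator B (snd z)) z
        = g B (restr S (fst z))"
      unfolding Pe' by (rule real_cond_exp_decoupled[OF Pe B g_meas[OF B] g[OF B e]])
    moreover note g[OF B e']
    ultimately show "AE z in P e'. real_cond_exp (P e') (gen_alg (P e') fst) (\<lambda>z. indicator B (snd z)) z
        = real_cond_exp (P e') (gen_alg (P e') (\<lambda>z. restr S (fst z)))
            (\<lambda>z. indicator B (snd z)) z"
      by eventually_elim simp
  qed
  then show "\<exists>b \<in> Spsi. cond_indep_Y_X_given_XS S (P (fst e, b))"
    using e' e'_eq by (intro bexI[of _ "snd e'"]) auto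
qed

section \<open>A controllable model violating the product assumption\<close>

lemma cond_indep_Y_X_given_XS_if_AE_fst_const:
  fixes Q :: "((real^'n::finite) \<times> 'y::euclidean_space) measure"
  assumes Q: "prob_space Q" and sets_Q[measurable_cong]: "sets Q = sets borel"
    and const: "AE z in Q. fst z = c"
  shows "cond_indep_Y_X_given_XS S Q"
  unfolding cond_indep_Y_X_given_XS_def
proof
  fix B :: "'y set" assume [measurable]: "B \<in> sets borel"
  note int = integrable_indicator_snd[OF Q sets_Q \<open>B \<in> sets borel\<close>]
  have "AE z in Q. real_cond_exp Q (gen_alg Q fst) (\<lambda>z. indicator B (snd z)) z
          = (\<integral>z. indicator B (snd z) \<partial>Q)"
    by (rule real_cond_exp_gen_alg_AE_const[OF Q int _ const]) measurable
  moreover have "AE z in Q. restr S (fst z) = restr S c"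
    using const by eventually_elim simp
  then have "AE z in Q. real_cond_exp Q (gen_alg Q (\<lambda>z. restr S (fst z)))
                          (\<lambda>z. indicator B (snd z)) z
          = (\<integral>z. indicator B (snd z) \<partial>Q)"
    by (rule real_cond_exp_gen_alg_AE_const[OF Q int, rotated]) measurable
  ultimately show "AE z in Q. real_cond_exp Q (gen_alg Q fst) (\<lambda>z. indicator B (snd z)) z
          = real_cond_exp Q (gen_alg Q (\<lambda>z. restr S (fst z))) (\<lambda>z. indicator B (snd z)) z"
    by eventually_elim simp
qed

definition fair_coin :: "bool measure" where
  "fair_coin = measure_pmf (bernoulli_pmf (1/2))"

definition coin_model :: "(bool \<Rightarrow> real^2) \<Rightarrow> ((real^2) \<times> real) measure" where
  "coin_model x = distr fair_coin borel (\<lambda>b. (x b, of_bool b))"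

lemma prob_space_fair_coin: "prob_space fair_coin"
  by (simp add: fair_coin_def prob_space_measure_pmf)

lemma emeasure_fair_coin_singleton: "emeasure fair_coin {b} = ennreal (1/2)"
  by (cases b) (simp_all add: fair_coin_def emeasure_pmf_single)

lemma sets_coin_model[simp, measurable_cong]: "sets (coin_model x) = sets borel"
  by (simp add: coin_model_def)

lemma prob_space_coin_model: "prob_space (coin_model x)"
  unfolding coin_model_def
  by (rule prob_space.prob_space_distr[OF prob_space_fair_coin]) (simp add: fair_coin_def)

lemma emeasure_coin_model:
  assumes "A \<in> sets borel"
  shows "emeasure (coin_model x) A = emeasure fair_coin {b. (x b, of_bool b) \<in> A}"
  unfolding coin_model_def using assms
  by (subst emeasure_distr) (auto simp: fair_coin_def vimage_def)

lemma distr_coin_model_restr_empty: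
  "distr (coin_model x) borel (\<lambda>z. restr {} (fst z)) = distr fair_coin borel (\<lambda>_. 0)"
  unfolding coin_model_def
  by (subst distr_distr) (auto simp: fair_coin_def comp_def)

lemma real_cond_exp_coin_model_restr_empty:
  assumes [measurable]: "B \<in> sets borel"
  shows "AE z in coin_model x.
           real_cond_exp (coin_model x) (gen_alg (coin_model x) (\<lambda>z. restr {} (fst z)))
             (\<lambda>z. indicator B (snd z)) z
         = (\<integral>b. indicator B (of_bool b) \<partial>fair_coin)"
proof -
  have "(\<integral>z. indicator B (snd z) \<partial>coin_model x) = (\<integral>b. indicator B (of_bool b) \<partial>fair_coin :: real)"
    unfolding coin_model_def by (subst integral_distr) (auto simp: fair_coin_def)
  with real_cond_exp_gen_alg_AE_const[OF prob_space_coin_model[of x]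
      integrable_indicator_snd[OF prob_space_coin_model sets_coin_model \<open>B \<in> sets borel\<close>],
      where X = "\<lambda>z. restr {} (fst z)" and c = 0]
  show ?thesis by simp
qed

definition counterexample :: "nat \<times> nat \<Rightarrow> ((real^2) \<times> real) measure" where
  "counterexample e = (if snd e = 0 then coin_model (\<lambda>_. 0) else coin_model (\<lambda>b. \<chi> i. of_bool b))"

lemma counterexample_cases:
  obtains x where "counterexample e = coin_model x"
  by (cases "snd e = 0") (auto simp: counterexample_def)

lemma counterexample_setting: "setting {0} {0, 1} counterexample {}"
  unfolding setting_def
proof (intro conjI)
  show "\<forall>e \<in> {0} \<times> {0, 1}. prob_space (counterexample e) \<and> sets (counterexample e) = sets borel"
    by (metis counterexample_cases prob_space_coin_model sets_coin_model)
  show "\<exists>g :: real set \<Rightarrow> real^2 \<Rightarrow> real. \<forall>B \<in> sets borel. g B \<in> borel_measurable borel \<and>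
          (\<forall>e \<in> {0} \<times> {0, 1}. AE z in counterexample e.
             real_cond_exp (counterexample e) (gen_alg (counterexample e) (\<lambda>z. restr {} (fst z)))
               (\<lambda>z. indicator B (snd z)) z = g B (restr {} (fst z)))"
  proof (intro exI[of _ "\<lambda>B _. \<integral>b. indicator B (of_bool b) \<partial>fair_coin"] ballI conjI)
    fix B :: "real set" and e :: "nat \<times> nat" assume "B \<in> sets borel"
    obtain x where e: "counterexample e = coin_model x"
      by (rule counterexample_cases)
    show "AE z in counterexample e.
            real_cond_exp (counterexample e) (gen_alg (counterexample e) (\<lambda>z. restr {} (fst z)))
              (\<lambda>z. indicator B (snd z)) z = (\<integral>b. indicator B (of_bool b) \<partial>fair_coin)"
      unfolding e by (rule real_cond_exp_coin_model_restr_empty) fact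
  qed simp
  show "\<forall>e \<in> {0} \<times> {0, 1}. \<forall>e' \<in> {0} \<times> {0, 1}.
          fst e = fst e' \<longrightarrow> phi_law {} counterexample e = phi_law {} counterexample e'"
    by (metis counterexample_cases phi_law_def distr_coin_model_restr_empty)
qed auto

lemma counterexample_controllable: "controllable {0} {0, 1} counterexample {}"
proof -
  have "AE z in coin_model (\<lambda>_. 0). fst z = 0"
    unfolding coin_model_def by (subst AE_distr_iff) (auto simp: fair_coin_def)
  then have "cond_indep_Y_X_given_XS {} (coin_model (\<lambda>_. 0))"
    by (rule cond_indep_Y_X_given_XS_if_AE_fst_const[OF prob_space_coin_model sets_coin_model])
  then show ?thesis
    unfolding controllable_def counterexample_def by auto
qed

lemma counterexample_not_product_assumption: "\<not> product_assumption {0} {0, 1} counterexample {}"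
proof
  assume product: "product_assumption {0} {0, 1} counterexample {}"
  define M where "M = coin_model (\<lambda>b. \<chi> i. of_bool b)"
  have M: "prob_space M" "sets M = sets borel"
    by (simp_all add: M_def prob_space_coin_model)
  have M_eq: "counterexample (0, 1) = M"
    by (simp add: counterexample_def M_def)
  have "(0, 1) \<in> {0 :: nat} \<times> {0 :: nat, 1}"
    by simp
  from bspec[OF product[unfolded product_assumption_def] this]
  have "\<exists>e' \<in> {0} \<times> {0, 1}. counterexample e' = decoupled {} M"
    by (simp only: M_eq product_law_eq_decoupled[OF M])
  then obtain e' where e': "counterexample e' = decoupled {} M" by blast
  have X1: "{x :: real^2. x $ 1 = 1} \<in> sets borel"
    by measurable
  define E where "E = {x :: real^2. x $ 1 = 1} \<times> {0 :: real}"
  have E: "E \<in> sets borel"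
    unfolding E_def sets_borel_prod using X1 by (intro pair_measureI) auto
  have null: "emeasure (counterexample e) E = 0" for e
    by (cases "snd e = 0")
       (simp_all add: counterexample_def emeasure_coin_model[OF E], simp_all add: E_def)
  have positive: "emeasure (decoupled {} M) E = ennreal (1/2) * ennreal (1/2)"
  proof -
    have Y0: "(UNIV :: (real^2) set) \<times> {0 :: real} \<in> sets borel"
      unfolding sets_borel_prod by (intro pair_measureI) auto
    have X1': "{x :: real^2. x $ 1 = 1} \<times> (UNIV :: real set) \<in> sets borel"
      unfolding sets_borel_prod using X1 by (intro pair_measureI) auto
    have "emeasure (decoupled {} M) E
        = emeasure M (UNIV \<times> {0}) * emeasure M ({x. x $ 1 = 1} \<times> UNIV)"
      unfolding E_def by (rule emeasure_decoupled_empty_Times[OF M X1]) simp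
    also have "\<dots> = emeasure fair_coin {False} * emeasure fair_coin {True}"
      unfolding M_def emeasure_coin_model[OF Y0] emeasure_coin_model[OF X1']
      by (auto intro!: arg_cong2[where f = "(*)"] arg_cong[where f = "emeasure fair_coin"])
    also have "\<dots> = ennreal (1/2) * ennreal (1/2)"
      by (simp only: emeasure_fair_coin_singleton)
    finally show ?thesis .
  qed
  show False
    using null[of e'] positive unfolding e' by simp
qed

theorem theorem5:
  shows "(\<forall>(Sphi :: 'a set) (Spsi :: 'b set)
            (P :: 'a \<times> 'b \<Rightarrow> ((real^'n::finite) \<times> 'y::euclidean_space) measure) (S :: 'n set).
            setting Sphi Spsi P S \<longrightarrow> product_assumption Sphi Spsi P S \<longrightarrow> controllable Sphi Spsi P S)
       \<and> (\<exists>(Sphi :: nat set) (Spsi :: nat set) (P :: nat \<times> nat \<Rightarrow> ((real^2) \<times> real) measure) (S :: 2 set).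
            setting Sphi Spsi P S \<and> controllable Sphi Spsi P S \<and> \<not> product_assumption Sphi Spsi P S)"
proof
  show "\<forall>(Sphi :: 'a set) (Spsi :: 'b set)
          (P :: 'a \<times> 'b \<Rightarrow> ((real^'n::finite) \<times> 'y::euclidean_space) measure) (S :: 'n set).
          setting Sphi Spsi P S \<longrightarrow> product_assumption Sphi Spsi P S \<longrightarrow> controllable Sphi Spsi P S"
    using controllable_if_product_assumption by blast
  show "\<exists>(Sphi :: nat set) (Spsi :: nat set) (P :: nat \<times> nat \<Rightarrow> ((real^2) \<times> real) measure) (S :: 2 set).
          setting Sphi Spsi P S \<and> controllable Sphi Spsi P S \<and> \<not> product_assumption Sphi Spsi P S"
    using counterexample_setting counterexample_controllable counterexample_not_product_assumption
    by blast
qed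

end
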